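(* Let $f\in\mathcal{S}(\Omega)$. (1) $\{y^c: y\in V(N(f^c))\}\supseteq V(f)$. (2) If $f'_s(x)\in C_A$ for every $x\in\Omega\setminus\mathbb{R}$, then for every $x\in\Omega$ the sets $\mathbb{S}_x\cap V(f)$ and $\mathbb{S}_x\cap V(f^c)$ are both empty, both singletons, or both equal to $\mathbb{S}_x$. Moreover, \[V(N(f))\supseteq\bigcup_{x\in V(f)}\mathbb{S}_x=\bigcup_{x\in V(f^c)}\mathbb{S}_x\subseteq V(N(f^c)).\] If, additionally, $A$ is nonsingular, then \[\bigcup_{x\in V(f)}\mathbb{S}_x=\bigcup_{x\in V(f^c)}\mathbb{S}_x=\bigcup_{\mathbb{S}_x\subseteq V(N(f))\cap V(N(f^c))}\mathbb{S}_x,\] whence $\bigcup_{x\in V(f)}\mathbb{S}_x=\bigcup_{x\in V(f^c)}\mathbb{S}_x=V(N(f))=V(N(f^c))$ if $f$ is also tame. (3) Suppose that $f^\circ_s(x)\in C_A$ for every $x\in\Omega$ and $f'_s(x)\in C_A$ for every $x\in\Omega\setminus\mathbb{R}$. Then \[\bigcup_{\mathbb{S}_x\subseteq V(N(f))}\mathbb{S}_x=\bigcup_{x\in V(f)}\mathbb{S}_x=\bigcup_{x\in V(f^c)}\mathbb{S}_x=\bigcup_{\mathbb{S}_x\subseteq V(N(f^c))}\mathbb{S}_x,\] whence $V(N(f))=\bigcup_{x\in V(f)}\mathbb{S}_x=\bigcup_{x\in V(f^c)}\mathbb{S}_x=V(N(f^c))$ if $f$ is also tame, and $V(N(f))=V(f)=V(f^c)=V(N(f^c))$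 if $f$ is slice preserving.
   Context: Let $A$ be a finite-dimensional real algebra with unit $1$ ($\mathbb{R}$ identified with $\mathbb{R}1$) which is alternative (the associator $(x,y,z)=(xy)z-x(yz)$ is alternating), with a $^*$-involution $x\mapsto x^c$ (real linear, $(x^c)^c=x$, $(xy)^c=y^cx^c$, $r^c=r$ for $r\in\mathbb{R}$). Let $t(x)=x+x^c$, $n(x)=xx^c$; $A$ is nonsingular if $n(x)=0$ implies $x=0$. The center of $A$ is the set of $r$ with $(r,a,b)=0$ and $ra=ar$ for all $a,b$; $C_A=\{0\}\cup\{a\in A: n(a),n(a^c)$ invertible elements of the center$\}$. Let $\mathbb{S}_A=\{J\in A:t(J)=0,n(J)=1\}$ (assumed non-empty), $Q_A=\mathbb{R}\cup\{x\in A:t(x),n(x)\in\mathbb{R},\ 4n(x)>t(x)^2\}$; every $x\in Q_A$ is $\alpha+\beta J$ with $\alpha,\beta\in\mathbb{R}$, $J\in\mathbb{S}_A$, $x^c=\alpha-\beta J$, $\mathrm{im}(x)=x-t(x)/2$, and $\mathbb{S}_x=\{\alpha+\beta I:I\in\mathbb{S}_A\}$. Let $D\subseteq\mathbb{C}$ be non-empty and invariant under complex conjugation and $\Omega=\{\alpha+\beta J:\alpha+i\beta\in D,\ J\in\mathbb{S}_A\}$. Let $A_{\mathbb{C}}=\{a+\imath b:a,b\in A\}$ with product $(a+\imath b)(a'+\imath b')=aa'-bb'+\imath(ab'+ba')$, conjugation $\overline{a+\imath b}=a-\imath b$, involution $(a+\imath b)^c=a^c+\imath b^c$. A stem function is $F=F_1+\imath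 F_2:D\to A_{\mathbb{C}}$ with $F(\bar z)=\overline{F(z)}$; it induces the slice function $f=\mathcal{I}(F)$, $f(\alpha+\beta J)=F_1(\alpha+i\beta)+JF_2(\alpha+i\beta)$. Slice product $f\cdot g=\mathcal{I}(FG)$, conjugate $f^c=\mathcal{I}(F^c)$, $F^c(z)=F(z)^c$, normal function $N(f)=f\cdot f^c$. $f$ is slice preserving if $F_1,F_2$ are real valued; tame if $N(f)$ is slice preserving and $N(f)=N(f^c)$. $V(h)=\{x:h(x)=0\}$. $f^\circ_s(x)=\frac12(f(x)+f(x^c))$, $f'_s(x)=\frac12\mathrm{im}(x)^{-1}(f(x)-f(x^c))$ for $x\in\Omega\setminus\mathbb{R}$. Unions of the form $\bigcup_{\mathbb{S}_x\subseteq E}\mathbb{S}_x$ range over $x\in\Omega$. *)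

theory Defs
  imports "HOL-Analysis.Analysis"
begin

text \<open>A finite-dimensional real unital alternative algebra with *-involution is modelled
on a type 'a of class euclidean_space (a finite-dimensional real vector space) together with
an explicit multiplication mul, unit e and involution cj.  A real number r is identified
with r *R e.\<close>

definition assoc :: "('a::real_vector \<Rightarrow> 'a \<Rightarrow> 'a) \<Rightarrow> 'a \<Rightarrow> 'a \<Rightarrow> 'a \<Rightarrow> 'a" where
  "assoc mul x y z = mul (mul x y) z - mul x (mul y z)"

definition alt_star_alg :: "('a::euclidean_space \<Rightarrow> 'a \<Rightarrow> 'a) \<Rightarrow> 'a \<Rightarrow> ('a \<Rightarrow> 'a) \<Rightarrow> bool" where
  "alt_star_alg mul e cj \<longleftrightarrow>
     bilinear mul \<and> e \<noteq> 0 \<and> (\<forall>x. mul e x = x \<and> mul x e = x) \<and>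
     (\<forall>x y. assoc mul x x y = 0 \<and> assoc mul x y x = 0 \<and> assoc mul y x x = 0) \<and>
     linear cj \<and> (\<forall>x. cj (cj x) = x) \<and> (\<forall>x y. cj (mul x y) = mul (cj y) (cj x)) \<and>
     (\<forall>r. cj (r *\<^sub>R e) = r *\<^sub>R e)"

definition realA :: "'a::real_vector \<Rightarrow> 'a set" where
  "realA e = range (\<lambda>r. r *\<^sub>R e)"

definition trA :: "('a::real_vector \<Rightarrow> 'a) \<Rightarrow> 'a \<Rightarrow> 'a" where
  "trA cj x = x + cj x"

definition nA :: "('a::real_vector \<Rightarrow> 'a \<Rightarrow> 'a) \<Rightarrow> ('a \<Rightarrow> 'a) \<Rightarrow> 'a \<Rightarrow> 'a" where
  "nA mul cj x = mul x (cj x)"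

definition nonsingular :: "('a::real_vector \<Rightarrow> 'a \<Rightarrow> 'a) \<Rightarrow> ('a \<Rightarrow> 'a) \<Rightarrow> bool" where
  "nonsingular mul cj \<longleftrightarrow> (\<forall>x. nA mul cj x = 0 \<longrightarrow> x = 0)"

definition centerA :: "('a::real_vector \<Rightarrow> 'a \<Rightarrow> 'a) \<Rightarrow> 'a set" where
  "centerA mul = {r. \<forall>a b. assoc mul r a b = 0 \<and> mul r a = mul a r}"

definition invertibleA :: "('a::real_vector \<Rightarrow> 'a \<Rightarrow> 'a) \<Rightarrow> 'a \<Rightarrow> 'a \<Rightarrow> bool" where
  "invertibleA mul e a \<longleftrightarrow> (\<exists>b. mul a b = e \<and> mul b a = e)"

definition invA :: "('a::real_vector \<Rightarrow> 'a \<Rightarrow> 'a) \<Rightarrow> 'a \<Rightarrow> 'a \<Rightarrow> 'a" where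
  "invA mul e a = (THE b. mul a b = e \<and> mul b a = e)"

definition CA :: "('a::real_vector \<Rightarrow> 'a \<Rightarrow> 'a) \<Rightarrow> 'a \<Rightarrow> ('a \<Rightarrow> 'a) \<Rightarrow> 'a set" where
  "CA mul e cj = {0} \<union> {a. nA mul cj a \<in> centerA mul \<and> invertibleA mul e (nA mul cj a) \<and>
                         nA mul cj (cj a) \<in> centerA mul \<and> invertibleA mul e (nA mul cj (cj a))}"

definition SA :: "('a::real_vector \<Rightarrow> 'a \<Rightarrow> 'a) \<Rightarrow> 'a \<Rightarrow> ('a \<Rightarrow> 'a) \<Rightarrow> 'a set" where
  "SA mul e cj = {J. trA cj J = 0 \<and> nA mul cj J = e}"

definition OmegaD :: "('a::real_vector \<Rightarrow> 'a \<Rightarrow> 'a) \<Rightarrow> 'a \<Rightarrow> ('a \<Rightarrow> 'a) \<Rightarrow> complex set \<Rightarrow> 'a set" where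
  "OmegaD mul e cj D = {\<alpha> *\<^sub>R e + \<beta> *\<^sub>R J | \<alpha> \<beta> J. Complex \<alpha> \<beta> \<in> D \<and> J \<in> SA mul e cj}"

definition Sx :: "('a::real_vector \<Rightarrow> 'a \<Rightarrow> 'a) \<Rightarrow> 'a \<Rightarrow> ('a \<Rightarrow> 'a) \<Rightarrow> 'a \<Rightarrow> 'a set" where
  "Sx mul e cj x = {y. \<exists>\<alpha> \<beta> J I. J \<in> SA mul e cj \<and> I \<in> SA mul e cj \<and>
                        x = \<alpha> *\<^sub>R e + \<beta> *\<^sub>R J \<and> y = \<alpha> *\<^sub>R e + \<beta> *\<^sub>R I}"

definition imA :: "('a::real_vector \<Rightarrow> 'a) \<Rightarrow> 'a \<Rightarrow> 'a" where
  "imA cj x = x - (1/2) *\<^sub>R trA cj x"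

text \<open>Stem functions F = F1 + i F2 : D \<rightarrow> A_C, represented by the pair (F1, F2).\<close>
definition is_stem :: "complex set \<Rightarrow> (complex \<Rightarrow> 'a::real_vector) \<Rightarrow> (complex \<Rightarrow> 'a) \<Rightarrow> bool" where
  "is_stem D F1 F2 \<longleftrightarrow> (\<forall>z\<in>D. F1 (cnj z) = F1 z \<and> F2 (cnj z) = - F2 z)"

definition sliceI :: "('a::real_vector \<Rightarrow> 'a \<Rightarrow> 'a) \<Rightarrow> 'a \<Rightarrow> ('a \<Rightarrow> 'a) \<Rightarrow> complex set \<Rightarrow>
    (complex \<Rightarrow> 'a) \<Rightarrow> (complex \<Rightarrow> 'a) \<Rightarrow> 'a \<Rightarrow> 'a" where
  "sliceI mul e cj D F1 F2 x = (SOME v. \<exists>\<alpha> \<beta> J. J \<in> SA mul e cj \<and> Complex \<alpha> \<beta> \<in> D \<and>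
        x = \<alpha> *\<^sub>R e + \<beta> *\<^sub>R J \<and> v = F1 (Complex \<alpha> \<beta>) + mul J (F2 (Complex \<alpha> \<beta>)))"

text \<open>Product in A_C: (F1 + i F2)(G1 + i G2) = F1 G1 - F2 G2 + i (F1 G2 + F2 G1), pointwise.\<close>
definition stem_mul1 :: "('a::real_vector \<Rightarrow> 'a \<Rightarrow> 'a) \<Rightarrow> (complex \<Rightarrow> 'a) \<Rightarrow> (complex \<Rightarrow> 'a) \<Rightarrow>
    (complex \<Rightarrow> 'a) \<Rightarrow> (complex \<Rightarrow> 'a) \<Rightarrow> complex \<Rightarrow> 'a" where
  "stem_mul1 mul F1 F2 G1 G2 z = mul (F1 z) (G1 z) - mul (F2 z) (G2 z)"

definition stem_mul2 :: "('a::real_vector \<Rightarrow> 'a \<Rightarrow> 'a) \<Rightarrow> (complex \<Rightarrow> 'a) \<Rightarrow> (complex \<Rightarrow> 'a) \<Rightarrow>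
    (complex \<Rightarrow> 'a) \<Rightarrow> (complex \<Rightarrow> 'a) \<Rightarrow> complex \<Rightarrow> 'a" where
  "stem_mul2 mul F1 F2 G1 G2 z = mul (F1 z) (G2 z) + mul (F2 z) (G1 z)"

definition slice_prod :: "('a::real_vector \<Rightarrow> 'a \<Rightarrow> 'a) \<Rightarrow> 'a \<Rightarrow> ('a \<Rightarrow> 'a) \<Rightarrow> complex set \<Rightarrow>
    (complex \<Rightarrow> 'a) \<Rightarrow> (complex \<Rightarrow> 'a) \<Rightarrow> (complex \<Rightarrow> 'a) \<Rightarrow> (complex \<Rightarrow> 'a) \<Rightarrow> 'a \<Rightarrow> 'a" where
  "slice_prod mul e cj D F1 F2 G1 G2 =
     sliceI mul e cj D (stem_mul1 mul F1 F2 G1 G2) (stem_mul2 mul F1 F2 G1 G2)"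

definition slice_conj :: "('a::real_vector \<Rightarrow> 'a \<Rightarrow> 'a) \<Rightarrow> 'a \<Rightarrow> ('a \<Rightarrow> 'a) \<Rightarrow> complex set \<Rightarrow>
    (complex \<Rightarrow> 'a) \<Rightarrow> (complex \<Rightarrow> 'a) \<Rightarrow> 'a \<Rightarrow> 'a" where
  "slice_conj mul e cj D F1 F2 = sliceI mul e cj D (cj \<circ> F1) (cj \<circ> F2)"

definition normal_fun :: "('a::real_vector \<Rightarrow> 'a \<Rightarrow> 'a) \<Rightarrow> 'a \<Rightarrow> ('a \<Rightarrow> 'a) \<Rightarrow> complex set \<Rightarrow>
    (complex \<Rightarrow> 'a) \<Rightarrow> (complex \<Rightarrow> 'a) \<Rightarrow> 'a \<Rightarrow> 'a" where
  "normal_fun mul e cj D F1 F2 = slice_prod mul e cj D F1 F2 (cj \<circ> F1) (cj \<circ> F2)"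

text \<open>I(F) is slice preserving iff F1, F2 are real valued (on D).\<close>
definition slice_preserving :: "'a::real_vector \<Rightarrow> complex set \<Rightarrow> (complex \<Rightarrow> 'a) \<Rightarrow> (complex \<Rightarrow> 'a) \<Rightarrow> bool" where
  "slice_preserving e D F1 F2 \<longleftrightarrow> (\<forall>z\<in>D. F1 z \<in> realA e \<and> F2 z \<in> realA e)"

text \<open>I(F) is tame iff N(f) is slice preserving and N(f) = N(f^c) (as functions on Omega).\<close>
definition tame :: "('a::real_vector \<Rightarrow> 'a \<Rightarrow> 'a) \<Rightarrow> 'a \<Rightarrow> ('a \<Rightarrow> 'a) \<Rightarrow> complex set \<Rightarrow>
    (complex \<Rightarrow> 'a) \<Rightarrow> (complex \<Rightarrow> 'a) \<Rightarrow> bool" where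
  "tame mul e cj D F1 F2 \<longleftrightarrow>
     slice_preserving e D (stem_mul1 mul F1 F2 (cj \<circ> F1) (cj \<circ> F2))
                          (stem_mul2 mul F1 F2 (cj \<circ> F1) (cj \<circ> F2)) \<and>
     (\<forall>x\<in>OmegaD mul e cj D. normal_fun mul e cj D F1 F2 x
                             = normal_fun mul e cj D (cj \<circ> F1) (cj \<circ> F2) x)"

definition Vz :: "'a set \<Rightarrow> ('a \<Rightarrow> 'a::zero) \<Rightarrow> 'a set" where
  "Vz \<Omega> h = {x\<in>\<Omega>. h x = 0}"

definition fs0 :: "('a::real_vector \<Rightarrow> 'a) \<Rightarrow> ('a \<Rightarrow> 'a) \<Rightarrow> 'a \<Rightarrow> 'a" where
  "fs0 cj f x = (1/2) *\<^sub>R (f x + f (cj x))"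

definition fs' :: "('a::real_vector \<Rightarrow> 'a \<Rightarrow> 'a) \<Rightarrow> 'a \<Rightarrow> ('a \<Rightarrow> 'a) \<Rightarrow> ('a \<Rightarrow> 'a) \<Rightarrow> 'a \<Rightarrow> 'a" where
  "fs' mul e cj f x = (1/2) *\<^sub>R mul (invA mul e (imA cj x)) (f x - f (cj x))"

definition USx :: "('a::real_vector \<Rightarrow> 'a \<Rightarrow> 'a) \<Rightarrow> 'a \<Rightarrow> ('a \<Rightarrow> 'a) \<Rightarrow> 'a set \<Rightarrow> 'a set" where
  "USx mul e cj E = (\<Union>x\<in>E. Sx mul e cj x)"

definition USx_in :: "('a::real_vector \<Rightarrow> 'a \<Rightarrow> 'a) \<Rightarrow> 'a \<Rightarrow> ('a \<Rightarrow> 'a) \<Rightarrow> complex set \<Rightarrow> 'a set \<Rightarrow> 'a set" where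
  "USx_in mul e cj D E = \<Union>{Sx mul e cj x | x. x \<in> OmegaD mul e cj D \<and> Sx mul e cj x \<subseteq> E}"

end

theory Submission
  imports Defs
begin

text \<open>At \<open>x = \<alpha> + \<beta>J\<close> write \<open>F(\<alpha> + i\<beta>) = a + \<i>b\<close>. Then \<open>f(x) = a + Jb\<close>, while \<open>N(f)\<close> and
  \<open>N(f\<^sup>c)\<close> take the values \<open>(aa\<^sup>c - bb\<^sup>c) + I(ab\<^sup>c + ba\<^sup>c)\<close> and \<open>(a\<^sup>ca - b\<^sup>cb) + I(a\<^sup>cb + b\<^sup>ca)\<close> at
  \<open>\<alpha> + \<beta>I\<close>. So everything reduces to the set of \<open>I \<in> \<bbbS>\<^sub>A\<close> solving \<open>a + Ib = 0\<close>, and unions of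
  spheres are compared through pointwise statements about this equation. Part (1) holds since
  \<open>a + Jb = 0\<close> forces \<open>N(f\<^sup>c)\<close> to vanish at \<open>\<alpha> - \<beta>J = x\<^sup>c\<close>. The hypothesis on \<open>f'\<^sub>s\<close> says
  \<open>b \<in> C\<^sub>A\<close>: then \<open>bb\<^sup>c = b\<^sup>cb\<close> is central and invertible, so \<open>b\<close> is invertible and, by the
  Moufang identities, \<open>b\<close> and \<open>b\<^sup>c\<close> associate with every element. Consequently \<open>a + Ib = 0\<close> has at most one
  solution, it is solvable iff \<open>a\<^sup>c + Ib\<^sup>c = 0\<close> is, and it is solvable as soon as the coefficients
  of \<open>N(f)\<close> and \<open>N(f\<^sup>c)\<close> vanish, provided \<open>A\<close> is nonsingular or also \<open>a \<in> C\<^sub>A\<close>.\<close>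

lemma self_eq_uminus_iff [simp]: "(v::'b::real_vector) = - v \<longleftrightarrow> v = 0"
proof
  assume "v = - v"
  then have "2 *\<^sub>R v = 0"
    by (simp add: scaleR_2 eq_neg_iff_add_eq_0[symmetric])
  then show "v = 0"
    by simp
qed simp

lemma uminus_eq_self_iff [simp]: "- (v::'b::real_vector) = v \<longleftrightarrow> v = 0"
  using self_eq_uminus_iff[of v] by (metis minus_minus)

section \<open>Alternative algebras with involution\<close>

locale alternative_star_algebra =
  fixes mul :: "'a::euclidean_space \<Rightarrow> 'a \<Rightarrow> 'a"  (infixl "\<odot>" 70)
    and e :: 'a and cj :: "'a \<Rightarrow> 'a"
  assumes alt_star_alg: "alt_star_alg mul e cj"
begin

lemma bilinear_mul: "bilinear mul"
  and unit_nonzero: "e \<noteq> 0"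
  and mul_unit [simp]: "e \<odot> x = x" "x \<odot> e = x"
  and linear_cj: "linear cj"
  and cj_cj [simp]: "cj (cj x) = x"
  and cj_mul: "cj (x \<odot> y) = cj y \<odot> cj x"
  and cj_real [simp]: "cj (r *\<^sub>R e) = r *\<^sub>R e"
  using alt_star_alg by (simp_all add: alt_star_alg_def)

lemma mul_linear_left [simp]:
  "(x + y) \<odot> z = x \<odot> z + y \<odot> z" "(x - y) \<odot> z = x \<odot> z - y \<odot> z" "(- x) \<odot> z = - (x \<odot> z)"
  "0 \<odot> z = 0" "(r *\<^sub>R x) \<odot> z = r *\<^sub>R (x \<odot> z)"
  using bilinear_mul
  by (simp_all add: bilinear_ladd bilinear_lsub bilinear_lneg bilinear_lzero bilinear_lmul)

lemma mul_linear_right [simp]: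
  "z \<odot> (x + y) = z \<odot> x + z \<odot> y" "z \<odot> (x - y) = z \<odot> x - z \<odot> y" "z \<odot> (- x) = - (z \<odot> x)"
  "z \<odot> 0 = 0" "z \<odot> (r *\<^sub>R x) = r *\<^sub>R (z \<odot> x)"
  using bilinear_mul
  by (simp_all add: bilinear_radd bilinear_rsub bilinear_rneg bilinear_rzero bilinear_rmul)

lemma cj_linear [simp]:
  "cj (x + y) = cj x + cj y" "cj (x - y) = cj x - cj y" "cj (- x) = - cj x"
  "cj 0 = 0" "cj (r *\<^sub>R x) = r *\<^sub>R cj x"
  using linear_cj by (simp_all add: linear_add linear_diff linear_neg linear_0 linear_scale)

lemma cj_unit [simp]: "cj e = e"
  using cj_real[of 1] by simp

lemma cj_eq_0_iff [simp]: "cj x = 0 \<longleftrightarrow> x = 0"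
  by (metis cj_cj cj_linear(4))

abbreviation asc :: "'a \<Rightarrow> 'a \<Rightarrow> 'a \<Rightarrow> 'a"
  where "asc \<equiv> assoc mul"

lemma asc_eq: "asc x y z = (x \<odot> y) \<odot> z - x \<odot> (y \<odot> z)"
  by (simp add: assoc_def)

lemma asc_left_alt: "asc x x y = 0"
  and asc_flexible: "asc x y x = 0"
  and asc_right_alt: "asc y x x = 0"
  using alt_star_alg by (auto simp: alt_star_alg_def)

lemma left_alternative: "(x \<odot> x) \<odot> y = x \<odot> (x \<odot> y)"
  using asc_left_alt[of x y] by (simp add: asc_eq)

lemma flexible: "(x \<odot> y) \<odot> x = x \<odot> (y \<odot> x)"
  using asc_flexible[of x y] by (simp add: asc_eq)

lemma right_alternative: "(y \<odot> x) \<odot> x = y \<odot> (x \<odot> x)"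
  using asc_right_alt[of y x] by (simp add: asc_eq)

lemma asc_swap12: "asc x y z = - asc y x z"
proof -
  have "asc x y z + asc y x z = asc (x + y) (x + y) z - asc x x z - asc y y z"
    by (simp add: asc_eq algebra_simps)
  then show ?thesis
    by (simp add: asc_left_alt eq_neg_iff_add_eq_0)
qed

lemma asc_swap23: "asc x y z = - asc x z y"
proof -
  have "asc x y z + asc x z y = asc x (y + z) (y + z) - asc x y y - asc x z z"
    by (simp add: asc_eq algebra_simps)
  then show ?thesis
    by (simp add: asc_right_alt eq_neg_iff_add_eq_0)
qed

lemma asc_swap13: "asc x y z = - asc z y x"
  and asc_cyclic: "asc x y z = asc y z x"
  by (metis asc_swap12 asc_swap23 minus_minus)+

lemma asc_unit [simp]: "asc e y z = 0" "asc x e z = 0" "asc x y e = 0"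
  by (simp_all add: asc_eq)

lemma teichmueller:
  "asc (a \<odot> b) c d - asc a (b \<odot> c) d + asc a b (c \<odot> d) = a \<odot> asc b c d + asc a b c \<odot> d"
  by (simp add: asc_eq algebra_simps)

lemma asc_square_left: "asc (x \<odot> x) y z = x \<odot> asc x y z + asc x y z \<odot> x"
proof -
  define P where "P = asc (x \<odot> x) y z"
  define A where "A = asc x y z"
  define U1 where "U1 = asc x (x \<odot> y) z"
  define U2 where "U2 = asc x (x \<odot> z) y"
  define V where "V = asc x (y \<odot> x) z"
  have "P - U1 = x \<odot> A"
    using teichmueller[of x x y z] by (simp add: asc_left_alt P_def U1_def A_def)
  moreover have "- P - U2 = - (x \<odot> A)"
    using teichmueller[of x x z y]
    by (simp add: asc_left_alt P_def U2_def A_def asc_swap23[of "x \<odot> x" z y] asc_swap23[of x z y])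
  moreover have "V - P = - (A \<odot> x)"
    using teichmueller[of z y x x]
    by (simp add: asc_right_alt P_def V_def A_def asc_swap13[of z "y \<odot> x" x]
        asc_swap13[of z y "x \<odot> x"] asc_cyclic[of "x \<odot> x" y z] asc_swap13[of z y x])
  moreover have "- U1 - V - U2 = - (x \<odot> A)"
    using teichmueller[of x y x z]
    by (simp add: asc_flexible U1_def U2_def V_def A_def asc_swap12[of "x \<odot> y" x z]
        asc_swap23[of x y "x \<odot> z"] asc_swap12[of y x z])
  ultimately have "P = x \<odot> A + A \<odot> x"
    by (simp add: algebra_simps)
  then show ?thesis
    by (simp add: P_def A_def)
qed

lemma asc_mul_third_left: "asc x y (x \<odot> z) = asc x y z \<odot> x"
proof -
  have "- asc (x \<odot> x) y z - asc x (x \<odot> z) y = - (x \<odot> asc x y z)"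
    using teichmueller[of x x z y] by (simp add: asc_left_alt asc_swap23[of "x \<odot> x" z y] asc_swap23[of x z y])
  then have "- asc x (x \<odot> z) y = asc (x \<odot> x) y z - x \<odot> asc x y z"
    by (simp add: algebra_simps)
  then show ?thesis
    using asc_swap23[of x y "x \<odot> z"] asc_square_left[of x y z] by simp
qed

lemma asc_mul_third_right: "asc x y (z \<odot> x) = x \<odot> asc x y z"
proof -
  have "- asc y (z \<odot> x) x + asc y z (x \<odot> x) = asc y z x \<odot> x"
    using teichmueller[of y z x x] by (simp add: asc_right_alt)
  moreover have "asc y (z \<odot> x) x = asc x y (z \<odot> x)"
    using asc_swap13[of y "z \<odot> x" x] asc_swap23[of x "z \<odot> x" y] by simp
  moreover have "asc y z (x \<odot> x) = asc (x \<odot> x) y z" "asc y z x = asc x y z"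
    using asc_cyclic by metis+
  ultimately show ?thesis
    using asc_square_left[of x y z] by (simp add: algebra_simps)
qed

lemma asc_mul_second_right: "asc x (y \<odot> x) z = x \<odot> asc x y z"
proof -
  have "asc x (y \<odot> x) z - asc (x \<odot> x) y z = - (asc x y z \<odot> x)"
    using teichmueller[of z y x x]
    by (simp add: asc_right_alt asc_swap13[of z "y \<odot> x" x] asc_swap13[of z y "x \<odot> x"]
        asc_cyclic[of "x \<odot> x" y z] asc_swap13[of z y x])
  then show ?thesis
    using asc_square_left[of x y z] by (simp add: algebra_simps)
qed

lemma asc_mul_first_right: "asc (y \<odot> x) x z = x \<odot> asc y x z"
proof -
  have "asc (y \<odot> x) x z - asc y (x \<odot> x) z + asc y x (x \<odot> z) = 0"
    using teichmueller[of y x x z] by (simp add: asc_left_alt asc_right_alt)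
  moreover have "asc y (x \<odot> x) z = - asc (x \<odot> x) y z"
    by (rule asc_swap12)
  moreover have "asc y x (x \<odot> z) = - (asc x y z \<odot> x)"
    using asc_swap12[of y x "x \<odot> z"] asc_mul_third_left[of x y z] by simp
  ultimately have "asc (y \<odot> x) x z = - asc (x \<odot> x) y z + asc x y z \<odot> x"
    by (simp add: algebra_simps)
  also have "\<dots> = x \<odot> asc y x z"
    using asc_square_left[of x y z] asc_swap12[of y x z] by simp
  finally show ?thesis .
qed

lemma middle_moufang: "(x \<odot> y) \<odot> (z \<odot> x) = x \<odot> ((y \<odot> z) \<odot> x)"
proof -
  have "(x \<odot> y) \<odot> (z \<odot> x) = asc x y (z \<odot> x) + x \<odot> (y \<odot> (z \<odot> x))"
    by (simp add: asc_eq)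
  also have "\<dots> = x \<odot> (asc y z x + y \<odot> (z \<odot> x))"
    using asc_cyclic[of x y z] by (simp add: asc_mul_third_right)
  also have "\<dots> = x \<odot> ((y \<odot> z) \<odot> x)"
    by (simp add: asc_eq)
  finally show ?thesis .
qed

lemma left_moufang: "((x \<odot> y) \<odot> x) \<odot> z = x \<odot> (y \<odot> (x \<odot> z))"
proof -
  have "((x \<odot> y) \<odot> x) \<odot> z = asc x (y \<odot> x) z + x \<odot> ((y \<odot> x) \<odot> z)"
    by (simp add: flexible asc_eq)
  also have "\<dots> = x \<odot> (asc x y z + (y \<odot> x) \<odot> z)"
    by (simp add: asc_mul_second_right)
  also have "\<dots> = x \<odot> (asc x y z + asc y x z + y \<odot> (x \<odot> z))"
    by (simp add: asc_eq)
  also have "\<dots> = x \<odot> (y \<odot> (x \<odot> z))"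
    using asc_swap12[of y x z] by simp
  finally show ?thesis .
qed

definition inverses :: "'a \<Rightarrow> 'a \<Rightarrow> bool"
  where "inverses c d \<longleftrightarrow> c \<odot> d = e \<and> d \<odot> c = e"

lemma inverses_sym: "inverses c d \<Longrightarrow> inverses d c"
  by (auto simp: inverses_def)

lemma inverses_cancel_left:
  assumes "inverses c d" "c \<odot> v = 0"
  shows "v = 0"
proof -
  have cd: "c \<odot> d = e" and dc: "d \<odot> c = e"
    using assms(1) by (auto simp: inverses_def)
  have "(d \<odot> c) \<odot> (v \<odot> d) = d \<odot> ((c \<odot> v) \<odot> d)"
    by (rule middle_moufang)
  then have "v \<odot> d = 0"
    using dc assms(2) by simp
  then have "asc v d c = - v" "asc d c v = v"
    using dc assms(2) by (simp_all add: asc_eq)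
  then show ?thesis
    using asc_cyclic[of v d c] by simp
qed

lemma inverses_cancel_right:
  assumes "inverses c d" "v \<odot> c = 0"
  shows "v = 0"
proof -
  have cd: "c \<odot> d = e"
    using assms(1) by (auto simp: inverses_def)
  have "(d \<odot> v) \<odot> (c \<odot> d) = d \<odot> ((v \<odot> c) \<odot> d)"
    by (rule middle_moufang)
  then have "d \<odot> v = 0"
    using cd assms(2) by simp
  then have "asc c d v = v" "asc d v c = 0"
    using cd assms(2) by (simp_all add: asc_eq)
  then show ?thesis
    using asc_cyclic[of c d v] by simp
qed

text \<open>Artin's theorem in the special case needed here: an element associates with its inverse.\<close>

lemma asc_inverses_left:
  assumes "inverses c d"
  shows "asc d c z = 0"
proof -
  have cd: "c \<odot> d = e" and dc: "d \<odot> c = e"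
    using assms by (auto simp: inverses_def)
  have "((c \<odot> d) \<odot> c) \<odot> z = c \<odot> (d \<odot> (c \<odot> z))"
    by (rule left_moufang)
  then have "d \<odot> (c \<odot> z) - z = 0"
    using cd inverses_cancel_left[OF assms, of "d \<odot> (c \<odot> z) - z"] by simp
  then have "d \<odot> (c \<odot> z) = z"
    by simp
  then show ?thesis
    using dc by (simp add: asc_eq)
qed

lemma asc_inverses:
  assumes "inverses c d"
  shows "asc d c z = 0" "asc c d z = 0" "asc z c d = 0" "asc z d c = 0" "asc c z d = 0" "asc d z c = 0"
proof -
  have "asc d c z = 0" "asc z c d = 0" "asc c z d = 0" if "inverses c d" for c d
    using asc_inverses_left[OF that, of z] asc_swap13[of z c d] asc_cyclic[of c z d]
      asc_cyclic[of z d c] by simp_all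
  then show "asc d c z = 0" "asc c d z = 0" "asc z c d = 0" "asc z d c = 0" "asc c z d = 0"
    "asc d z c = 0"
    using assms inverses_sym[OF assms] by blast+
qed

lemma central_comm: "m \<in> centerA mul \<Longrightarrow> m \<odot> x = x \<odot> m"
  by (simp add: centerA_def)

lemma asc_central:
  assumes "m \<in> centerA mul"
  shows "asc m x y = 0" "asc x m y = 0" "asc x y m = 0"
proof -
  have m: "\<And>x y. asc m x y = 0"
    using assms by (simp add: centerA_def)
  then show "asc m x y = 0" "asc x m y = 0" "asc x y m = 0"
    using asc_swap12[of x m y] asc_cyclic[of x y m] asc_cyclic[of y m x] by simp_all
qed

lemma central_mul:
  assumes m: "m \<in> centerA mul"
  shows "(m \<odot> x) \<odot> y = m \<odot> (x \<odot> y)" "x \<odot> (m \<odot> y) = m \<odot> (x \<odot> y)"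
proof -
  show first: "(m \<odot> x) \<odot> y = m \<odot> (x \<odot> y)" for x y
    using asc_central(1)[OF m, of x y] by (simp add: asc_eq)
  have "x \<odot> (m \<odot> y) = (x \<odot> m) \<odot> y"
    using asc_central(2)[OF m, of x y] by (simp add: asc_eq)
  then show "x \<odot> (m \<odot> y) = m \<odot> (x \<odot> y)"
    using central_comm[OF m] first by simp
qed

lemma asc_central_mul:
  assumes m: "m \<in> centerA mul"
  shows "asc (m \<odot> x) y z = m \<odot> asc x y z" "asc x (m \<odot> y) z = m \<odot> asc x y z"
    "asc x y (m \<odot> z) = m \<odot> asc x y z"
  by (simp_all add: asc_eq central_mul[OF m])

lemma central_scaleR:
  assumes "m \<in> centerA mul"
  shows "r *\<^sub>R m \<in> centerA mul"
proof -
  have "asc (r *\<^sub>R m) x y = r *\<^sub>R asc m x y" for x y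
    by (simp add: asc_eq algebra_simps)
  then show ?thesis
    using asc_central(1)[OF assms] central_comm[OF assms] by (simp add: centerA_def)
qed

lemma inverse_central:
  assumes m: "m \<in> centerA mul" and mn: "inverses m n"
  shows "n \<in> centerA mul"
proof -
  have me: "m \<odot> n = e"
    using mn by (simp add: inverses_def)
  have "n \<odot> x = x \<odot> n" for x
  proof -
    have "m \<odot> (n \<odot> x - x \<odot> n) = (m \<odot> n) \<odot> x - x \<odot> (m \<odot> n)"
      by (simp add: central_mul[OF m] flip: central_comm[OF m])
    then have "m \<odot> (n \<odot> x - x \<odot> n) = 0"
      using me by simp
    then show ?thesis
      using inverses_cancel_left[OF mn, of "n \<odot> x - x \<odot> n"] by simp
  qed
  moreover have "asc n x y = 0" for x y
  proof -
    have "m \<odot> asc n x y = 0"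
      using asc_central_mul(1)[OF m, of n x y] me by simp
    then show ?thesis
      using inverses_cancel_left[OF mn] by simp
  qed
  ultimately show ?thesis
    by (simp add: centerA_def)
qed

lemma cj_inverse_central:
  assumes N: "N \<in> centerA mul" "inverses N Ni" and "cj N = N"
  shows "cj Ni = Ni"
proof -
  have "cj (N \<odot> Ni) = e"
    using N(2) by (simp add: inverses_def)
  then have "cj Ni \<odot> N = e"
    using assms(3) by (simp only: cj_mul)
  then show ?thesis
    using N(2) asc_central(2)[OF N(1), of "cj Ni" Ni] by (simp add: asc_eq inverses_def)
qed

lemma SA_cj: "J \<in> SA mul e cj \<Longrightarrow> cj J = - J"
  by (simp add: SA_def trA_def eq_neg_iff_add_eq_0 add.commute)

lemma SA_square:
  assumes "J \<in> SA mul e cj"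
  shows "J \<odot> J = - e"
proof -
  have "J \<odot> cj J = e"
    using assms by (simp add: SA_def nA_def)
  then show ?thesis
    using SA_cj[OF assms] by (metis mul_linear_right(3) minus_minus)
qed

lemma SA_iff: "J \<in> SA mul e cj \<longleftrightarrow> cj J = - J \<and> J \<odot> J = - e"
proof
  assume "cj J = - J \<and> J \<odot> J = - e"
  then show "J \<in> SA mul e cj"
    by (simp add: SA_def nA_def trA_def)
qed (simp add: SA_cj SA_square)

lemma SA_uminus: "J \<in> SA mul e cj \<Longrightarrow> - J \<in> SA mul e cj"
  by (simp add: SA_iff)

lemma SA_mul_SA: "J \<in> SA mul e cj \<Longrightarrow> J \<odot> (J \<odot> x) = - x"
  using left_alternative[of J x] SA_square[of J] by simp

lemma invertible_scaleR:
  assumes "invertibleA mul e x" "r \<noteq> 0"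
  shows "invertibleA mul e (r *\<^sub>R x)"
proof -
  obtain y where "x \<odot> y = e" "y \<odot> x = e"
    using assms(1) by (auto simp: invertibleA_def)
  then have "(r *\<^sub>R x) \<odot> ((1/r) *\<^sub>R y) = e \<and> ((1/r) *\<^sub>R y) \<odot> (r *\<^sub>R x) = e"
    using assms(2) by simp
  then show ?thesis
    unfolding invertibleA_def by blast
qed

lemma CA_zero: "0 \<in> CA mul e cj"
  by (simp add: CA_def)

lemma CA_cj: "b \<in> CA mul e cj \<Longrightarrow> cj b \<in> CA mul e cj"
  by (auto simp: CA_def)

lemma CA_scaleR:
  assumes b: "b \<in> CA mul e cj"
  shows "r *\<^sub>R b \<in> CA mul e cj"
proof (cases "r = 0 \<or> b = 0")
  case True
  then show ?thesis
    using CA_zero by auto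
next
  case False
  then have rr: "r * r \<noteq> 0"
    by simp
  have "nA mul cj (r *\<^sub>R b) = (r * r) *\<^sub>R nA mul cj b"
    "nA mul cj (cj (r *\<^sub>R b)) = (r * r) *\<^sub>R nA mul cj (cj b)"
    by (simp_all add: nA_def)
  then show ?thesis
    using b False central_scaleR invertible_scaleR[OF _ rr] by (simp add: CA_def)
qed

lemma CA_norm:
  assumes b: "b \<in> CA mul e cj" "b \<noteq> 0"
  obtains N Ni where "N \<in> centerA mul" "Ni \<in> centerA mul" "inverses N Ni"
    "b \<odot> cj b = N" "cj b \<odot> b = N" "cj Ni = Ni" "inverses b (Ni \<odot> cj b)"
proof -
  define N where "N = b \<odot> cj b"
  define M where "M = cj b \<odot> b"
  have N: "N \<in> centerA mul" "invertibleA mul e N" and M: "M \<in> centerA mul" "invertibleA mul e M"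
    using b by (auto simp: CA_def nA_def N_def M_def)
  obtain Ni where NNi: "N \<odot> Ni = e" "Ni \<odot> N = e"
    using N(2) by (auto simp: invertibleA_def)
  obtain Mi where MMi: "M \<odot> Mi = e" "Mi \<odot> M = e"
    using M(2) by (auto simp: invertibleA_def)
  have Ni: "Ni \<in> centerA mul" and Mi: "Mi \<in> centerA mul"
    using inverse_central[OF N(1), of Ni] inverse_central[OF M(1), of Mi] NNi MMi
    by (simp_all add: inverses_def)
  define L where "L = Mi \<odot> cj b"
  define R where "R = Ni \<odot> cj b"
  have Lb: "L \<odot> b = e"
    using MMi central_mul(1)[OF Mi, of "cj b" b] by (simp add: L_def M_def)
  have bR: "b \<odot> R = e"
    using NNi central_mul(2)[OF Ni, of b "cj b"] by (simp add: R_def N_def)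
  have "asc L b R = Ni \<odot> (Mi \<odot> asc (cj b) b (cj b))"
    by (simp add: L_def R_def asc_central_mul(1)[OF Mi] asc_central_mul(3)[OF Ni])
  then have "asc L b R = 0"
    by (simp add: asc_flexible)
  \<comment> \<open>left and right inverse of \<open>b\<close> agree since \<open>b\<close> associates with them\<close>
  then have LR: "L = R"
    using Lb bR by (simp add: asc_eq)
  have "Ni \<odot> M = e"
    using LR Lb central_mul(1)[OF Ni, of "cj b" b] by (simp add: R_def M_def)
  then have MN: "M = N"
    using NNi central_mul(1)[OF N(1), of Ni M] by simp
  have NNi': "inverses N Ni"
    using NNi by (simp add: inverses_def)
  moreover have "cj Ni = Ni"
    using cj_inverse_central[OF N(1) NNi'] by (simp add: N_def cj_mul)
  moreover have "inverses b (Ni \<odot> cj b)"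
    using bR LR Lb by (simp add: inverses_def R_def L_def)
  moreover have "cj b \<odot> b = N"
    using MN by (simp add: M_def)
  ultimately show ?thesis
    using that[OF N(1) Ni _ N_def[symmetric]] by blast
qed

lemma CA_norm_eq_0_iff:
  assumes "a \<in> CA mul e cj"
  shows "a \<odot> cj a = 0 \<longleftrightarrow> a = 0"
  using assms unit_nonzero by (auto simp: CA_def nA_def invertibleA_def)

lemma CA_normal:
  assumes "a \<in> CA mul e cj"
  shows "cj a \<odot> a = a \<odot> cj a"
proof (cases "a = 0")
  case False
  then show ?thesis
    using CA_norm[OF assms] by metis
qed simp

lemma CA_norm_central:
  assumes "b \<in> CA mul e cj"
  shows "b \<odot> cj b \<in> centerA mul"
proof (cases "b = 0")
  case True
  then show ?thesis
    by (simp add: centerA_def asc_eq)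
next
  case False
  then show ?thesis
    using assms by (simp add: CA_def nA_def)
qed

lemma inverse_if_norm_central:
  assumes N: "N \<in> centerA mul" "inverses N Ni" and aN: "a \<odot> cj a = N" "cj a \<odot> a = N"
  shows "inverses a (Ni \<odot> cj a)"
  using assms central_mul[OF inverse_central[OF N]] by (simp add: inverses_def central_comm[OF N(1)])

text \<open>\<open>a\<^sup>c = N (N\<^sup>-\<^sup>1 a\<^sup>c)\<close> is a central multiple of the inverse of \<open>a\<close>.\<close>

lemma asc_cj_if_norm_central:
  assumes N: "N \<in> centerA mul" "inverses N Ni" and aN: "a \<odot> cj a = N" "cj a \<odot> a = N"
  shows "asc a (cj a) x = 0" "asc (cj a) a x = 0" "asc x a (cj a) = 0" "asc x (cj a) a = 0"
    "asc a x (cj a) = 0" "asc (cj a) x a = 0"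
proof -
  have inv: "inverses a (Ni \<odot> cj a)"
    by (rule inverse_if_norm_central[OF assms])
  have "cj a = N \<odot> (Ni \<odot> cj a)"
    using N central_mul(1)[OF N(1), of Ni "cj a"] by (simp add: inverses_def)
  then show "asc a (cj a) x = 0" "asc (cj a) a x = 0" "asc x a (cj a) = 0" "asc x (cj a) a = 0"
    "asc a x (cj a) = 0" "asc (cj a) x a = 0"
    by (metis asc_central_mul[OF N(1)] asc_inverses[OF inv] mul_linear_right(4))+
qed

lemma asc_CA_cj:
  assumes b: "b \<in> CA mul e cj"
  shows "asc b (cj b) x = 0" "asc (cj b) b x = 0" "asc x b (cj b) = 0" "asc x (cj b) b = 0"
    "asc b x (cj b) = 0" "asc (cj b) x b = 0"
proof -
  have "asc b (cj b) x = 0 \<and> asc (cj b) b x = 0 \<and> asc x b (cj b) = 0 \<and>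
    asc x (cj b) b = 0 \<and> asc b x (cj b) = 0 \<and> asc (cj b) x b = 0"
  proof (cases "b = 0")
    case False
    then show ?thesis
      using CA_norm[OF b] asc_cj_if_norm_central by metis
  qed (simp add: asc_eq)
  then show "asc b (cj b) x = 0" "asc (cj b) b x = 0" "asc x b (cj b) = 0" "asc x (cj b) b = 0"
    "asc b x (cj b) = 0" "asc (cj b) x b = 0"
    by simp_all
qed

section \<open>The equation \<open>a + I b = 0\<close> on the sphere \<open>\<bbbS>\<^sub>A\<close>\<close>

text \<open>In \<open>A\<^sub>\<complex>\<close>, \<open>(a + \<i> b)(a + \<i> b)\<^sup>c = N_re a b + \<i> N_im a b\<close>.\<close>

definition N_re :: "'a \<Rightarrow> 'a \<Rightarrow> 'a"
  where "N_re a b = a \<odot> cj a - b \<odot> cj b"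

definition N_im :: "'a \<Rightarrow> 'a \<Rightarrow> 'a"
  where "N_im a b = a \<odot> cj b + b \<odot> cj a"

definition SA_roots :: "'a \<Rightarrow> 'a \<Rightarrow> 'a set"
  where "SA_roots a b = {I \<in> SA mul e cj. a + I \<odot> b = 0}"

lemma SA_roots_iff: "I \<in> SA_roots a b \<longleftrightarrow> I \<in> SA mul e cj \<and> a = - (I \<odot> b)"
  by (auto simp: SA_roots_def eq_neg_iff_add_eq_0)

lemma N_zero_if_SA_root:
  assumes b: "b \<in> CA mul e cj" and I: "I \<in> SA_roots a b"
  shows "N_re a b = 0 \<and> N_im a b = 0"
proof -
  have I_SA: "I \<in> SA mul e cj" and a: "a = - (I \<odot> b)"
    using I by (simp_all add: SA_roots_iff)
  have ca: "cj a = cj b \<odot> I"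
    using a SA_cj[OF I_SA] by (simp add: cj_mul)
  have n: "b \<odot> cj b \<in> centerA mul"
    by (rule CA_norm_central[OF b])
  have "(I \<odot> b) \<odot> cj b = I \<odot> (b \<odot> cj b)" "b \<odot> (cj b \<odot> I) = (b \<odot> cj b) \<odot> I"
    using asc_CA_cj(3)[OF b, of I] asc_CA_cj(1)[OF b, of I] by (simp_all add: asc_eq)
  then have "N_im a b = 0"
    using a ca central_comm[OF n, of I] by (simp add: N_im_def)
  moreover have "a \<odot> cj a = - (I \<odot> ((b \<odot> cj b) \<odot> I))"
    using a ca middle_moufang[of I b "cj b"] by simp
  then have "N_re a b = 0"
    using central_comm[OF n, of I] SA_mul_SA[OF I_SA] by (simp add: N_re_def)
  ultimately show ?thesis
    by simp
qed

lemma N_conj_vanishes_at_uminus_SA_root: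
  assumes J: "J \<in> SA_roots a b"
  shows "N_re (cj a) (cj b) + (- J) \<odot> N_im (cj a) (cj b) = 0"
proof -
  have J_SA: "J \<in> SA mul e cj" and a: "a = - (J \<odot> b)"
    using J by (simp_all add: SA_roots_iff)
  have ca: "cj a = cj b \<odot> J"
    using a SA_cj[OF J_SA] by (simp add: cj_mul)
  have "(u \<odot> J) \<odot> (J \<odot> v) = - (u \<odot> v) - J \<odot> asc u J v" for u v
  proof -
    have "(u \<odot> J) \<odot> (J \<odot> v) = ((u \<odot> J) \<odot> J) \<odot> v - asc (u \<odot> J) J v"
      by (simp add: asc_eq)
    also have "\<dots> = (u \<odot> (J \<odot> J)) \<odot> v - J \<odot> asc u J v"
      by (simp add: right_alternative asc_mul_first_right)
    finally show ?thesis
      using SA_square[OF J_SA] by simp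
  qed
  moreover have "N_re (cj a) (cj b) = cj a \<odot> a - cj b \<odot> b"
    by (simp add: N_re_def)
  moreover have "N_im (cj a) (cj b) = cj a \<odot> b + cj b \<odot> a"
    by (simp add: N_im_def)
  ultimately have "N_re (cj a) (cj b) = J \<odot> asc (cj b) J b" "N_im (cj a) (cj b) = asc (cj b) J b"
    unfolding ca by (simp_all add: a asc_eq)
  then show ?thesis
    by simp
qed

lemma SA_roots_unique:
  assumes b: "b \<in> CA mul e cj" "b \<noteq> 0" and "I \<in> SA_roots a b" "I' \<in> SA_roots a b"
  shows "I = I'"
proof -
  obtain N Ni where inv: "inverses b (Ni \<odot> cj b)"
    using CA_norm[OF b] by metis
  have "(I - I') \<odot> b = 0"
    using assms(3,4) by (simp add: SA_roots_iff)
  then show ?thesis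
    using inverses_cancel_right[OF inv, of "I - I'"] by simp
qed

lemma SA_roots_mul_SA_nonempty:
  assumes c: "c \<in> CA mul e cj" and I: "I \<in> SA mul e cj"
  shows "SA_roots (c \<odot> I) c \<noteq> {}"
proof (cases "c = 0")
  case True
  then show ?thesis
    using I by (auto simp: SA_roots_def)
next
  case False
  then obtain N Ni where Ni: "Ni \<in> centerA mul" and cNi: "cj Ni = Ni"
    and inv: "inverses c (Ni \<odot> cj c)"
    using CA_norm[OF c] by metis
  define d where "d = Ni \<odot> cj c"
  have dc: "d \<odot> c = e"
    using inv by (simp add: inverses_def d_def)
  define I' where "I' = - ((c \<odot> I) \<odot> d)"
  have I'c: "I' \<odot> c = - (c \<odot> I)"
    using asc_inverses(4)[OF inv, of "c \<odot> I"] dc by (simp add: I'_def asc_eq d_def)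
  have "cj I' = Ni \<odot> (c \<odot> (I \<odot> cj c))"
    using SA_cj[OF I] cNi central_comm[OF Ni, of c] central_mul(1)[OF Ni, of c "I \<odot> cj c"]
    by (simp add: I'_def d_def cj_mul)
  moreover have "c \<odot> (I \<odot> cj c) = (c \<odot> I) \<odot> cj c"
    using asc_CA_cj(5)[OF c, of I] by (simp add: asc_eq)
  ultimately have "cj I' = - I'"
    using central_mul(2)[OF Ni, of "c \<odot> I" "cj c"] by (simp add: I'_def d_def)
  moreover have "I' \<odot> I' = - e"
  proof -
    have "d \<odot> (c \<odot> I) = I"
      using asc_inverses(1)[OF inv, of I] dc by (simp add: asc_eq d_def)
    then have "I' \<odot> (c \<odot> I) = c"
      using flexible[of "c \<odot> I" d] right_alternative[of c I] SA_square[OF I]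
      by (simp add: I'_def)
    then have "(I' \<odot> I' + e) \<odot> c = 0"
      using left_alternative[of I' c] I'c by simp
    then show ?thesis
      using inverses_cancel_right[OF inv, of "I' \<odot> I' + e"] by (simp add: eq_neg_iff_add_eq_0)
  qed
  ultimately have "I' \<in> SA_roots (c \<odot> I) c"
    using I'c by (simp add: SA_roots_def SA_iff)
  then show ?thesis
    by blast
qed

lemma SA_roots_conj_nonempty:
  assumes b: "b \<in> CA mul e cj" and I: "I \<in> SA_roots a b"
  shows "SA_roots (cj a) (cj b) \<noteq> {}"
proof -
  have I_SA: "I \<in> SA mul e cj" and "cj a = cj b \<odot> I"
    using I SA_cj by (auto simp: SA_roots_iff cj_mul)
  then show ?thesis
    using SA_roots_mul_SA_nonempty[OF CA_cj[OF b] I_SA] by simp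
qed

lemma SA_roots_nonempty_if_N_zero:
  assumes b: "b \<in> CA mul e cj" "b \<noteq> 0"
    and N: "N_re a b = 0" "N_re (cj a) (cj b) = 0" "N_im a b = 0"
  shows "SA_roots a b \<noteq> {}"
proof -
  obtain N Ni where Nc: "N \<in> centerA mul" and Ni: "Ni \<in> centerA mul" and NNi: "inverses N Ni"
    and bN: "b \<odot> cj b = N" "cj b \<odot> b = N" and cNi: "cj Ni = Ni" and inv: "inverses b (Ni \<odot> cj b)"
    using CA_norm[OF b] by metis
  have NiN: "Ni \<odot> N = e"
    using NNi by (simp add: inverses_def)
  have aN: "a \<odot> cj a = N" "cj a \<odot> a = N"
    using N bN by (simp_all add: N_re_def)
  have h3: "a \<odot> cj b = - (b \<odot> cj a)"
    using N(3) by (simp add: N_im_def eq_neg_iff_add_eq_0)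
  define I where "I = - (Ni \<odot> (a \<odot> cj b))"
  have "(a \<odot> cj b) \<odot> b = N \<odot> a"
    using asc_cj_if_norm_central(4)[OF Nc NNi bN, of a] bN(2) central_comm[OF Nc, of a]
    by (simp add: asc_eq)
  then have Ib: "I \<odot> b = - a"
    using central_mul(1)[OF Ni, of "a \<odot> cj b" b] central_mul(1)[OF Ni, of N a] NiN
    by (simp add: I_def)
  have "(b \<odot> cj a) \<odot> a = N \<odot> b"
    using asc_cj_if_norm_central(4)[OF Nc NNi aN, of b] aN(2) central_comm[OF Nc, of b]
    by (simp add: asc_eq)
  then have Ia: "I \<odot> a = b"
    using h3 central_mul(1)[OF Ni, of "b \<odot> cj a" a] central_mul(1)[OF Ni, of N b] NiN
    by (simp add: I_def)
  have "cj I = - I"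
    using cNi h3 central_comm[OF Ni, of "b \<odot> cj a"] by (simp add: I_def cj_mul)
  moreover have "I \<odot> I = - e"
  proof -
    have "(I \<odot> I + e) \<odot> b = 0"
      using left_alternative[of I b] Ib Ia by simp
    then show ?thesis
      using inverses_cancel_right[OF inv, of "I \<odot> I + e"] by (simp add: eq_neg_iff_add_eq_0)
  qed
  ultimately have "I \<in> SA_roots a b"
    using Ib by (simp add: SA_roots_iff SA_iff)
  then show ?thesis
    by blast
qed

lemma SA_roots_nonempty_if_N_zero_nonsingular:
  assumes ns: "nonsingular mul cj" and SA: "SA mul e cj \<noteq> {}" and b: "b \<in> CA mul e cj"
    and N: "N_re a b = 0" "N_re (cj a) (cj b) = 0" "N_im a b = 0"
  shows "SA_roots a b \<noteq> {}"
proof (cases "b = 0")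
  case True
  then have "nA mul cj a = 0"
    using N(1) by (simp add: N_re_def nA_def)
  then have "a = 0"
    using ns by (simp add: nonsingular_def)
  then show ?thesis
    using True SA by (simp add: SA_roots_def)
next
  case False
  then show ?thesis
    by (rule SA_roots_nonempty_if_N_zero[OF b _ N])
qed

lemma SA_roots_nonempty_if_N_zero_CA:
  assumes SA: "SA mul e cj \<noteq> {}" and a: "a \<in> CA mul e cj" and b: "b \<in> CA mul e cj"
    and N: "N_re a b = 0" "N_im a b = 0"
  shows "SA_roots a b \<noteq> {}"
proof (cases "b = 0")
  case True
  then have "a = 0"
    using N(1) CA_norm_eq_0_iff[OF a] by (simp add: N_re_def)
  then show ?thesis
    using True SA by (simp add: SA_roots_def)
next
  case False
  have "N_re (cj a) (cj b) = 0"
    using N(1) CA_normal[OF a] CA_normal[OF b] by (simp add: N_re_def)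
  then show ?thesis
    using SA_roots_nonempty_if_N_zero[OF b False] N by blast
qed

lemma SA_roots_zero: "SA_roots a 0 = (if a = 0 then SA mul e cj else {})"
  by (auto simp: SA_roots_def)

lemma SA_roots_trichotomy:
  assumes b: "b \<in> CA mul e cj"
  shows "(SA_roots a b = {} \<and> SA_roots (cj a) (cj b) = {}) \<or>
    ((\<exists>I. SA_roots a b = {I}) \<and> (\<exists>I. SA_roots (cj a) (cj b) = {I})) \<or>
    (SA_roots a b = SA mul e cj \<and> SA_roots (cj a) (cj b) = SA mul e cj)"
proof (cases "b = 0")
  case True
  then show ?thesis
    by (simp add: SA_roots_zero)
next
  case False
  have cb: "cj b \<in> CA mul e cj" "cj b \<noteq> 0"
    using CA_cj[OF b] False by simp_all
  show ?thesis
  proof (cases "SA_roots a b = {}")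
    case True
    then have "SA_roots (cj a) (cj b) = {}"
      using SA_roots_conj_nonempty[OF cb(1), of _ "cj a"] by auto
    then show ?thesis
      using True by simp
  next
    case False
    then obtain I I' where "I \<in> SA_roots a b" "I' \<in> SA_roots (cj a) (cj b)"
      using SA_roots_conj_nonempty[OF b] by blast
    then have "SA_roots a b = {I}" "SA_roots (cj a) (cj b) = {I'}"
      using SA_roots_unique[OF b \<open>b \<noteq> 0\<close>] SA_roots_unique[OF cb] by blast+
    then show ?thesis
      by blast
  qed
qed

lemma real_SA_independent:
  assumes J: "J \<in> SA mul e cj"
  shows "r *\<^sub>R e + s *\<^sub>R J = 0 \<longleftrightarrow> r = 0 \<and> s = 0"
proof
  assume rs: "r *\<^sub>R e + s *\<^sub>R J = 0"
  have "r *\<^sub>R e = s *\<^sub>R J"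
    using arg_cong[OF rs, of cj] SA_cj[OF J] by simp
  moreover have "r *\<^sub>R e = - (s *\<^sub>R J)"
    using rs by (simp add: eq_neg_iff_add_eq_0)
  ultimately have "s *\<^sub>R J = 0"
    by simp
  moreover have "J \<noteq> 0"
    using SA_square[OF J] unit_nonzero by auto
  ultimately show "r = 0 \<and> s = 0"
    using rs unit_nonzero by simp
qed simp

lemma eq_0_if_vanishes_on_SA:
  assumes "SA mul e cj \<noteq> {}" and "\<forall>I\<in>SA mul e cj. p + I \<odot> q = 0"
  shows "p = 0 \<and> q = 0"
proof -
  obtain J where J: "J \<in> SA mul e cj"
    using assms(1) by blast
  have "p + J \<odot> q = 0" and "p + (- J) \<odot> q = 0"
    using assms(2) J SA_uminus[OF J] by blast+
  then have "J \<odot> q = 0" "p = 0"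
    by (simp_all add: eq_neg_iff_add_eq_0[symmetric])
  then show ?thesis
    using SA_mul_SA[OF J, of q] by simp
qed

section \<open>Slice points and spheres\<close>

definition slice_point :: "complex \<Rightarrow> 'a \<Rightarrow> 'a"
  where "slice_point z J = Re z *\<^sub>R e + Im z *\<^sub>R J"

definition slice_sphere :: "complex \<Rightarrow> 'a set"
  where "slice_sphere z = slice_point z ` SA mul e cj"

definition slice_spheres :: "complex set \<Rightarrow> (complex \<Rightarrow> bool) \<Rightarrow> 'a set"
  where "slice_spheres D P = (\<Union>z\<in>{z \<in> D. P z}. slice_sphere z)"

lemma slice_spheres_cong:
  "(\<And>z. z \<in> D \<Longrightarrow> P z \<longleftrightarrow> Q z) \<Longrightarrow> slice_spheres D P = slice_spheres D Q"
  by (auto simp: slice_spheres_def)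

lemma slice_spheres_subset:
  "(\<And>z. z \<in> D \<Longrightarrow> P z \<Longrightarrow> slice_sphere z \<subseteq> E) \<Longrightarrow> slice_spheres D P \<subseteq> E"
  by (auto simp: slice_spheres_def)

lemma slice_point_cnj: "slice_point (cnj z) J = slice_point z (- J)"
  by (simp add: slice_point_def)

lemma cj_slice_point: "J \<in> SA mul e cj \<Longrightarrow> cj (slice_point z J) = slice_point z (- J)"
  by (simp add: slice_point_def SA_cj)

lemma slice_point_eq_cases:
  assumes J: "J \<in> SA mul e cj" and I: "I \<in> SA mul e cj" and eq: "slice_point w I = slice_point z J"
  shows "w = z \<and> (Im z = 0 \<or> I = J) \<or> w = cnj z \<and> (Im z = 0 \<or> I = - J)"
proof -
  have "slice_point w (- I) = slice_point z (- J)"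
    using arg_cong[OF eq, of cj] I J by (simp add: cj_slice_point)
  then have "(Re w *\<^sub>R e + Im w *\<^sub>R I) + (Re w *\<^sub>R e - Im w *\<^sub>R I)
      = (Re z *\<^sub>R e + Im z *\<^sub>R J) + (Re z *\<^sub>R e - Im z *\<^sub>R J)"
    using eq by (simp add: slice_point_def)
  then have "Re w *\<^sub>R e + Re w *\<^sub>R e = Re z *\<^sub>R e + Re z *\<^sub>R e"
    by (simp add: algebra_simps)
  then have "(Re w + Re w) *\<^sub>R e = (Re z + Re z) *\<^sub>R e"
    by (simp only: scaleR_add_left)
  then have "Re w + Re w = Re z + Re z"
    using unit_nonzero by (metis scaleR_cancel_right)
  then have re: "Re w = Re z"
    by simp
  then have im: "Im w *\<^sub>R I = Im z *\<^sub>R J"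
    using eq by (simp add: slice_point_def)
  have "(Im w * Im w) *\<^sub>R (I \<odot> I) = (Im z * Im z) *\<^sub>R (J \<odot> J)"
    using arg_cong[OF im, of "\<lambda>x. x \<odot> x"] by simp
  then have "Im w * Im w = Im z * Im z"
    using SA_square[OF I] SA_square[OF J] unit_nonzero by simp
  then have "Im w = Im z \<or> Im w = - Im z"
    by (simp add: square_eq_iff)
  then show ?thesis
  proof
    assume "Im w = Im z"
    then show ?thesis
      using re im by (auto simp: complex_eq_iff)
  next
    assume "Im w = - Im z"
    then have "Im z *\<^sub>R (- I) = Im z *\<^sub>R J"
      using im by simp
    then have "Im z = 0 \<or> I = - J"
      by (metis scaleR_cancel_left minus_minus)
    then show ?thesis
      using re \<open>Im w = - Im z\<close> by (auto simp: complex_eq_iff)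
  qed
qed

lemma OmegaD_iff: "x \<in> OmegaD mul e cj D \<longleftrightarrow> (\<exists>z\<in>D. \<exists>J\<in>SA mul e cj. x = slice_point z J)"
proof
  assume "x \<in> OmegaD mul e cj D"
  then obtain \<alpha> \<beta> J where "Complex \<alpha> \<beta> \<in> D" "J \<in> SA mul e cj" "x = \<alpha> *\<^sub>R e + \<beta> *\<^sub>R J"
    unfolding OmegaD_def by blast
  moreover have "x = slice_point (Complex \<alpha> \<beta>) J"
    using calculation by (simp add: slice_point_def)
  ultimately show "\<exists>z\<in>D. \<exists>J\<in>SA mul e cj. x = slice_point z J"
    by blast
next
  assume "\<exists>z\<in>D. \<exists>J\<in>SA mul e cj. x = slice_point z J"
  then obtain z J where "z \<in> D" "J \<in> SA mul e cj" "x = Re z *\<^sub>R e + Im z *\<^sub>R J"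
    by (auto simp: slice_point_def)
  moreover have "Complex (Re z) (Im z) \<in> D"
    using calculation by simp
  ultimately show "x \<in> OmegaD mul e cj D"
    unfolding OmegaD_def by blast
qed

lemma Sx_slice_point:
  assumes J: "J \<in> SA mul e cj"
  shows "Sx mul e cj (slice_point z J) = slice_sphere z"
proof
  show "Sx mul e cj (slice_point z J) \<subseteq> slice_sphere z"
  proof
    fix y
    assume "y \<in> Sx mul e cj (slice_point z J)"
    then obtain \<alpha> \<beta> J' I where J': "J' \<in> SA mul e cj" and I: "I \<in> SA mul e cj"
      and "slice_point z J = \<alpha> *\<^sub>R e + \<beta> *\<^sub>R J'" and "y = \<alpha> *\<^sub>R e + \<beta> *\<^sub>R I"
      unfolding Sx_def by blast
    then have eq: "slice_point (Complex \<alpha> \<beta>) J' = slice_point z J"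
      and y: "y = slice_point (Complex \<alpha> \<beta>) I"
      by (simp_all add: slice_point_def)
    from slice_point_eq_cases[OF J J' eq] have "Complex \<alpha> \<beta> = z \<or> Complex \<alpha> \<beta> = cnj z"
      by blast
    then have "y = slice_point z I \<or> y = slice_point z (- I)"
      using y slice_point_cnj by auto
    then show "y \<in> slice_sphere z"
      using I SA_uminus[OF I] by (auto simp: slice_sphere_def)
  qed
next
  show "slice_sphere z \<subseteq> Sx mul e cj (slice_point z J)"
    using J unfolding Sx_def slice_sphere_def slice_point_def by blast
qed

lemma slice_point_in_realA_iff:
  assumes J: "J \<in> SA mul e cj"
  shows "slice_point z J \<in> realA e \<longleftrightarrow> Im z = 0"
proof
  assume "slice_point z J \<in> realA e"
  then obtain r where "slice_point z J = r *\<^sub>R e"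
    by (auto simp: realA_def)
  then have "(Re z - r) *\<^sub>R e + Im z *\<^sub>R J = 0"
    by (simp add: slice_point_def algebra_simps)
  then show "Im z = 0"
    using real_SA_independent[OF J] by blast
qed (use rangeI[of "\<lambda>r. r *\<^sub>R e" "Re z"] in \<open>simp add: slice_point_def realA_def\<close>)

lemma USx_in_eq_slice_spheres: "USx_in mul e cj D E = slice_spheres D (\<lambda>z. slice_sphere z \<subseteq> E)"
proof
  show "USx_in mul e cj D E \<subseteq> slice_spheres D (\<lambda>z. slice_sphere z \<subseteq> E)"
    unfolding USx_in_def slice_spheres_def using OmegaD_iff Sx_slice_point by fastforce
next
  show "slice_spheres D (\<lambda>z. slice_sphere z \<subseteq> E) \<subseteq> USx_in mul e cj D E"
  proof
    fix y
    assume "y \<in> slice_spheres D (\<lambda>z. slice_sphere z \<subseteq> E)"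
    then obtain z I where "z \<in> D" "I \<in> SA mul e cj" "slice_sphere z \<subseteq> E" "y = slice_point z I"
      by (auto simp: slice_spheres_def slice_sphere_def)
    moreover have "y \<in> slice_sphere z"
      using calculation by (simp add: slice_sphere_def)
    ultimately show "y \<in> USx_in mul e cj D E"
      unfolding USx_in_def using OmegaD_iff[of y D] Sx_slice_point[of I z] by blast
  qed
qed

lemma is_stem_imag_real:
  assumes "is_stem D G1 G2" "z \<in> D" "Im z = 0"
  shows "G2 z = 0"
proof -
  have "G2 (cnj z) = - G2 z"
    using assms(1,2) by (simp add: is_stem_def)
  moreover have "cnj z = z"
    using assms(3) by (simp add: complex_eq_iff)
  ultimately show ?thesis
    by simp
qed

lemma is_stem_cj: "is_stem D G1 G2 \<Longrightarrow> is_stem D (cj \<circ> G1) (cj \<circ> G2)"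
  by (simp add: is_stem_def)

lemma is_stem_mul:
  "is_stem D F1 F2 \<Longrightarrow> is_stem D G1 G2 \<Longrightarrow>
    is_stem D (stem_mul1 mul F1 F2 G1 G2) (stem_mul2 mul F1 F2 G1 G2)"
  by (simp add: is_stem_def stem_mul1_def stem_mul2_def)

lemma sliceI_slice_point:
  assumes stem: "is_stem D G1 G2" and z: "z \<in> D" and J: "J \<in> SA mul e cj"
  shows "sliceI mul e cj D G1 G2 (slice_point z J) = G1 z + J \<odot> G2 z"
proof -
  let ?P = "\<lambda>v. \<exists>\<alpha> \<beta> I. I \<in> SA mul e cj \<and> Complex \<alpha> \<beta> \<in> D \<and>
    slice_point z J = \<alpha> *\<^sub>R e + \<beta> *\<^sub>R I \<and> v = G1 (Complex \<alpha> \<beta>) + I \<odot> G2 (Complex \<alpha> \<beta>)"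
  have "?P (G1 z + J \<odot> G2 z)"
    using z J unfolding slice_point_def by (metis complex.collapse)
  moreover have "v = G1 z + J \<odot> G2 z" if "?P v" for v
  proof -
    obtain w I where w: "w \<in> D" and I: "I \<in> SA mul e cj" and eq: "slice_point w I = slice_point z J"
      and v: "v = G1 w + I \<odot> G2 w"
      using \<open>?P v\<close> unfolding slice_point_def by (metis complex.sel)
    from slice_point_eq_cases[OF J I eq] show ?thesis
    proof (elim disjE conjE)
      assume "w = cnj z" "Im z = 0"
      then show ?thesis
        using v w z stem is_stem_imag_real[OF stem] by (simp add: is_stem_def)
    next
      assume "w = cnj z" "I = - J"
      then show ?thesis
        using v z stem by (simp add: is_stem_def)
    qed (use v w z stem is_stem_imag_real[OF stem] in simp_all)
  qed
  ultimately show ?thesis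
    unfolding sliceI_def by (rule someI2)
qed

lemma USx_in_subset: "USx_in mul e cj D E \<subseteq> E"
  by (auto simp: USx_in_def)

lemma invA_scaleR_SA:
  assumes J: "J \<in> SA mul e cj" and "\<beta> \<noteq> 0"
  shows "invA mul e (\<beta> *\<^sub>R J) = (- (1 / \<beta>)) *\<^sub>R J"
  unfolding invA_def
proof (rule the_equality)
  show "(\<beta> *\<^sub>R J) \<odot> ((- (1 / \<beta>)) *\<^sub>R J) = e \<and> ((- (1 / \<beta>)) *\<^sub>R J) \<odot> (\<beta> *\<^sub>R J) = e"
    using SA_square[OF J] assms(2) by simp
next
  fix c
  assume "(\<beta> *\<^sub>R J) \<odot> c = e \<and> c \<odot> (\<beta> *\<^sub>R J) = e"
  then have "(1 / \<beta>) *\<^sub>R (\<beta> *\<^sub>R (J \<odot> c)) = (1 / \<beta>) *\<^sub>R e"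
    by simp
  then have "J \<odot> c = (1 / \<beta>) *\<^sub>R e"
    using assms(2) by simp
  then have "- c = (1 / \<beta>) *\<^sub>R J"
    using SA_mul_SA[OF J, of c] by simp
  then show "c = (- (1 / \<beta>)) *\<^sub>R J"
    by (metis minus_minus scaleR_minus_left)
qed

end

section \<open>Zero sets of a slice function and of its normal function\<close>

locale stem_function = alternative_star_algebra +
  fixes D :: "complex set" and G1 G2 :: "complex \<Rightarrow> 'a"
  assumes stem: "is_stem D G1 G2" and SA_nonempty: "SA mul e cj \<noteq> {}"
begin

abbreviation \<Omega> :: "'a set"
  where "\<Omega> \<equiv> OmegaD mul e cj D"

abbreviation V :: "('a \<Rightarrow> 'a) \<Rightarrow> 'a set"
  where "V h \<equiv> Vz \<Omega> h"

abbreviation f :: "'a \<Rightarrow> 'a"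
  where "f \<equiv> sliceI mul e cj D G1 G2"

abbreviation fc :: "'a \<Rightarrow> 'a"
  where "fc \<equiv> slice_conj mul e cj D G1 G2"

abbreviation Nf :: "'a \<Rightarrow> 'a"
  where "Nf \<equiv> normal_fun mul e cj D G1 G2"

abbreviation Nfc :: "'a \<Rightarrow> 'a"
  where "Nfc \<equiv> normal_fun mul e cj D (cj \<circ> G1) (cj \<circ> G2)"

lemma conj_stem_function: "stem_function mul e cj D (cj \<circ> G1) (cj \<circ> G2)"
  using alt_star_alg is_stem_cj[OF stem] SA_nonempty
  by (simp add: stem_function_def stem_function_axioms_def alternative_star_algebra_def)

lemma f_at: "z \<in> D \<Longrightarrow> J \<in> SA mul e cj \<Longrightarrow> f (slice_point z J) = G1 z + J \<odot> G2 z"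
  by (rule sliceI_slice_point[OF stem])

lemma Nf_at:
  "z \<in> D \<Longrightarrow> J \<in> SA mul e cj \<Longrightarrow>
    Nf (slice_point z J) = N_re (G1 z) (G2 z) + J \<odot> N_im (G1 z) (G2 z)"
  using sliceI_slice_point[OF is_stem_mul[OF stem is_stem_cj[OF stem]]]
  by (simp add: normal_fun_def slice_prod_def stem_mul1_def stem_mul2_def N_re_def N_im_def)

lemma fc_at: "z \<in> D \<Longrightarrow> J \<in> SA mul e cj \<Longrightarrow> fc (slice_point z J) = cj (G1 z) + J \<odot> cj (G2 z)"
  using stem_function.f_at[OF conj_stem_function] by (simp add: slice_conj_def)

lemma Nfc_at:
  "z \<in> D \<Longrightarrow> J \<in> SA mul e cj \<Longrightarrow>
    Nfc (slice_point z J) = N_re (cj (G1 z)) (cj (G2 z)) + J \<odot> N_im (cj (G1 z)) (cj (G2 z))"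
  using stem_function.Nf_at[OF conj_stem_function] by simp

lemma slice_point_in_Omega: "z \<in> D \<Longrightarrow> J \<in> SA mul e cj \<Longrightarrow> slice_point z J \<in> \<Omega>"
  using OmegaD_iff by blast

lemma slice_sphere_zeros_f: "z \<in> D \<Longrightarrow> slice_sphere z \<inter> V f = slice_point z ` SA_roots (G1 z) (G2 z)"
  using f_at slice_point_in_Omega by (auto simp: slice_sphere_def SA_roots_def Vz_def)

lemma slice_sphere_zeros_fc:
  "z \<in> D \<Longrightarrow> slice_sphere z \<inter> V fc = slice_point z ` SA_roots (cj (G1 z)) (cj (G2 z))"
  using stem_function.slice_sphere_zeros_f[OF conj_stem_function] by (simp add: slice_conj_def)

lemma slice_sphere_subset_zeros_Nf_iff:
  assumes z: "z \<in> D"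
  shows "slice_sphere z \<subseteq> V Nf \<longleftrightarrow> N_re (G1 z) (G2 z) = 0 \<and> N_im (G1 z) (G2 z) = 0"
proof -
  have "slice_sphere z \<subseteq> V Nf \<longleftrightarrow> (\<forall>I\<in>SA mul e cj. Nf (slice_point z I) = 0)"
    using z slice_point_in_Omega by (auto simp: slice_sphere_def Vz_def)
  also have "\<dots> \<longleftrightarrow> (\<forall>I\<in>SA mul e cj. N_re (G1 z) (G2 z) + I \<odot> N_im (G1 z) (G2 z) = 0)"
    using z by (simp add: Nf_at)
  also have "\<dots> \<longleftrightarrow> N_re (G1 z) (G2 z) = 0 \<and> N_im (G1 z) (G2 z) = 0"
  proof
    assume "\<forall>I\<in>SA mul e cj. N_re (G1 z) (G2 z) + I \<odot> N_im (G1 z) (G2 z) = 0"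
    then show "N_re (G1 z) (G2 z) = 0 \<and> N_im (G1 z) (G2 z) = 0"
      by (rule eq_0_if_vanishes_on_SA[OF SA_nonempty])
  qed simp
  finally show ?thesis .
qed

lemma zeros_f_eq: "V f = (\<Union>z\<in>D. slice_point z ` SA_roots (G1 z) (G2 z))"
proof -
  have "V f = (\<Union>z\<in>D. slice_sphere z \<inter> V f)"
    by (auto simp: Vz_def OmegaD_iff slice_sphere_def)
  then show ?thesis
    using slice_sphere_zeros_f by simp
qed

lemma USx_zeros_f: "USx mul e cj (V f) = slice_spheres D (\<lambda>z. SA_roots (G1 z) (G2 z) \<noteq> {})"
  unfolding zeros_f_eq USx_def slice_spheres_def
  by (auto simp: SA_roots_def Sx_slice_point)

lemma USx_zeros_fc: "USx mul e cj (V fc) = slice_spheres D (\<lambda>z. SA_roots (cj (G1 z)) (cj (G2 z)) \<noteq> {})"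
  using stem_function.USx_zeros_f[OF conj_stem_function] by (simp add: slice_conj_def)

lemma USx_in_zeros_Nf:
  "USx_in mul e cj D (V Nf) = slice_spheres D (\<lambda>z. N_re (G1 z) (G2 z) = 0 \<and> N_im (G1 z) (G2 z) = 0)"
  unfolding USx_in_eq_slice_spheres by (rule slice_spheres_cong) (rule slice_sphere_subset_zeros_Nf_iff)

lemma USx_in_common_zeros_N:
  "USx_in mul e cj D (V Nf \<inter> V Nfc) =
    slice_spheres D (\<lambda>z. N_re (G1 z) (G2 z) = 0 \<and> N_im (G1 z) (G2 z) = 0 \<and>
      N_re (cj (G1 z)) (cj (G2 z)) = 0 \<and> N_im (cj (G1 z)) (cj (G2 z)) = 0)"
  unfolding USx_in_eq_slice_spheres
  using slice_sphere_subset_zeros_Nf_iff stem_function.slice_sphere_subset_zeros_Nf_iff[OF conj_stem_function]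
  by (intro slice_spheres_cong) auto


lemma zeros_f_subset_cj_zeros_Nfc: "V f \<subseteq> cj ` V Nfc"
proof
  fix x
  assume "x \<in> V f"
  then obtain z J where z: "z \<in> D" and J: "J \<in> SA mul e cj" and x: "x = slice_point z J"
    and "f x = 0"
    by (auto simp: Vz_def OmegaD_iff)
  then have "J \<in> SA_roots (G1 z) (G2 z)"
    using f_at by (simp add: SA_roots_def)
  then have "Nfc (slice_point z (- J)) = 0"
    using Nfc_at[OF z SA_uminus[OF J]] N_conj_vanishes_at_uminus_SA_root by simp
  then have "slice_point z (- J) \<in> V Nfc"
    using slice_point_in_Omega[OF z SA_uminus[OF J]] by (simp add: Vz_def)
  moreover have "x = cj (slice_point z (- J))"
    using x cj_slice_point[OF SA_uminus[OF J]] by simp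
  ultimately show "x \<in> cj ` V Nfc"
    by blast
qed

lemma slice_sphere_zeros_trichotomy:
  assumes imag: "\<forall>z\<in>D. G2 z \<in> CA mul e cj" and x: "x \<in> \<Omega>"
  shows "(Sx mul e cj x \<inter> V f = {} \<and> Sx mul e cj x \<inter> V fc = {})
    \<or> ((\<exists>a. Sx mul e cj x \<inter> V f = {a}) \<and> (\<exists>b. Sx mul e cj x \<inter> V fc = {b}))
    \<or> (Sx mul e cj x \<inter> V f = Sx mul e cj x \<and> Sx mul e cj x \<inter> V fc = Sx mul e cj x)"
proof -
  obtain z J where z: "z \<in> D" and J: "J \<in> SA mul e cj" and "x = slice_point z J"
    using x OmegaD_iff by blast
  then have "Sx mul e cj x = slice_point z ` SA mul e cj"
    "Sx mul e cj x \<inter> V f = slice_point z ` SA_roots (G1 z) (G2 z)"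
    "Sx mul e cj x \<inter> V fc = slice_point z ` SA_roots (cj (G1 z)) (cj (G2 z))"
    using Sx_slice_point slice_sphere_zeros_f slice_sphere_zeros_fc by (simp_all add: slice_sphere_def)
  then show ?thesis
    using SA_roots_trichotomy[of "G2 z" "G1 z"] imag z by auto
qed

lemma USx_zeros_f_subset_zeros_Nf:
  assumes imag: "\<forall>z\<in>D. G2 z \<in> CA mul e cj"
  shows "USx mul e cj (V f) \<subseteq> V Nf"
  unfolding USx_zeros_f
  using imag N_zero_if_SA_root slice_sphere_subset_zeros_Nf_iff by (intro slice_spheres_subset) blast

lemma USx_zeros_f_eq_USx_zeros_fc:
  assumes imag: "\<forall>z\<in>D. G2 z \<in> CA mul e cj"
  shows "USx mul e cj (V f) = USx mul e cj (V fc)"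
  unfolding USx_zeros_f USx_zeros_fc
proof (rule slice_spheres_cong)
  fix z
  assume "z \<in> D"
  then have "G2 z \<in> CA mul e cj" "cj (G2 z) \<in> CA mul e cj"
    using imag CA_cj by blast+
  then show "SA_roots (G1 z) (G2 z) \<noteq> {} \<longleftrightarrow> SA_roots (cj (G1 z)) (cj (G2 z)) \<noteq> {}"
    using SA_roots_conj_nonempty[of "G2 z" _ "G1 z"] SA_roots_conj_nonempty[of "cj (G2 z)" _ "cj (G1 z)"]
    by auto
qed

lemma USx_zeros_fc_subset_zeros_Nfc:
  assumes imag: "\<forall>z\<in>D. G2 z \<in> CA mul e cj"
  shows "USx mul e cj (V fc) \<subseteq> V Nfc"
  using stem_function.USx_zeros_f_subset_zeros_Nf[OF conj_stem_function] imag CA_cj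
  by (simp add: slice_conj_def)

lemma USx_zeros_f_eq_USx_in_common_zeros_N:
  assumes imag: "\<forall>z\<in>D. G2 z \<in> CA mul e cj" and ns: "nonsingular mul cj"
  shows "USx mul e cj (V f) = USx_in mul e cj D (V Nf \<inter> V Nfc)"
  unfolding USx_zeros_f USx_in_common_zeros_N
proof (rule slice_spheres_cong)
  fix z
  assume "z \<in> D"
  then have b: "G2 z \<in> CA mul e cj" "cj (G2 z) \<in> CA mul e cj"
    using imag CA_cj by blast+
  show "SA_roots (G1 z) (G2 z) \<noteq> {} \<longleftrightarrow> N_re (G1 z) (G2 z) = 0 \<and> N_im (G1 z) (G2 z) = 0 \<and>
      N_re (cj (G1 z)) (cj (G2 z)) = 0 \<and> N_im (cj (G1 z)) (cj (G2 z)) = 0"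
    using N_zero_if_SA_root[OF b(1)] N_zero_if_SA_root[OF b(2)] SA_roots_conj_nonempty[OF b(1)]
      SA_roots_nonempty_if_N_zero_nonsingular[OF ns SA_nonempty b(1)] by blast
qed

lemma tame_USx_in_zeros_Nf:
  assumes "tame mul e cj D G1 G2"
  shows "USx_in mul e cj D (V Nf) = V Nf"
proof
  show "V Nf \<subseteq> USx_in mul e cj D (V Nf)"
  proof
    fix x
    assume "x \<in> V Nf"
    then obtain z J where z: "z \<in> D" and J: "J \<in> SA mul e cj" and x: "x = slice_point z J"
      and "Nf x = 0"
      by (auto simp: Vz_def OmegaD_iff)
    moreover have "N_re (G1 z) (G2 z) \<in> range (\<lambda>r. r *\<^sub>R e) \<and> N_im (G1 z) (G2 z) \<in> range (\<lambda>r. r *\<^sub>R e)"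
      using assms z
      by (simp add: tame_def slice_preserving_def realA_def stem_mul1_def stem_mul2_def N_re_def N_im_def)
    then obtain r s where "N_re (G1 z) (G2 z) = r *\<^sub>R e" "N_im (G1 z) (G2 z) = s *\<^sub>R e"
      by blast
    ultimately have "N_re (G1 z) (G2 z) = 0 \<and> N_im (G1 z) (G2 z) = 0"
      using Nf_at real_SA_independent[OF J, of r s] by simp
    then show "x \<in> USx_in mul e cj D (V Nf)"
      unfolding USx_in_zeros_Nf using z J x by (auto simp: slice_spheres_def slice_sphere_def)
  qed
qed (rule USx_in_subset)

lemma tame_zeros_Nf_eq_zeros_Nfc: "tame mul e cj D G1 G2 \<Longrightarrow> V Nf = V Nfc"
  by (auto simp: tame_def Vz_def)

lemma USx_in_zeros_Nf_eq_USx_zeros_f: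
  assumes CA: "\<forall>z\<in>D. G1 z \<in> CA mul e cj \<and> G2 z \<in> CA mul e cj"
  shows "USx_in mul e cj D (V Nf) = USx mul e cj (V f)"
  unfolding USx_in_zeros_Nf USx_zeros_f
  using CA N_zero_if_SA_root SA_roots_nonempty_if_N_zero_CA[OF SA_nonempty]
  by (intro slice_spheres_cong) blast

lemma USx_in_zeros_Nfc_eq_USx_zeros_fc:
  assumes CA: "\<forall>z\<in>D. G1 z \<in> CA mul e cj \<and> G2 z \<in> CA mul e cj"
  shows "USx_in mul e cj D (V Nfc) = USx mul e cj (V fc)"
  using stem_function.USx_in_zeros_Nf_eq_USx_zeros_f[OF conj_stem_function] CA CA_cj
  by (simp add: slice_conj_def)

lemma slice_preserving_zeros:
  assumes "slice_preserving e D G1 G2"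
  shows "V Nf = V f" "V f = V fc" "V fc = V Nfc"
proof -
  have "Nf x = Nfc x \<and> f x = fc x \<and> (Nf x = 0 \<longleftrightarrow> f x = 0)" if "x \<in> \<Omega>" for x
  proof -
    obtain z J where z: "z \<in> D" and J: "J \<in> SA mul e cj" and x: "x = slice_point z J"
      using \<open>x \<in> \<Omega>\<close> OmegaD_iff by blast
    moreover have "G1 z \<in> range (\<lambda>r. r *\<^sub>R e) \<and> G2 z \<in> range (\<lambda>r. r *\<^sub>R e)"
      using assms z by (simp add: slice_preserving_def realA_def)
    ultimately obtain r s where rs: "G1 z = r *\<^sub>R e" "G2 z = s *\<^sub>R e"
      by blast
    have "N_re (G1 z) (G2 z) = (r * r - s * s) *\<^sub>R e"
      by (simp add: rs N_re_def scaleR_diff_left)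
    moreover have "N_im (G1 z) (G2 z) = (r * s + r * s) *\<^sub>R e"
      by (simp add: rs N_im_def mult.commute flip: scaleR_add_left)
    ultimately have "Nf x = (r * r - s * s) *\<^sub>R e + (r * s + r * s) *\<^sub>R J" "Nfc x = Nf x"
      using Nf_at[OF z J] Nfc_at[OF z J] x rs by simp_all
    moreover have "f x = r *\<^sub>R e + s *\<^sub>R J" "fc x = f x"
      using f_at[OF z J] fc_at[OF z J] x rs by simp_all
    moreover have "r * r - s * s = 0 \<and> r * s + r * s = 0 \<longleftrightarrow> r = 0 \<and> s = 0"
      by auto
    ultimately show ?thesis
      by (simp only: real_SA_independent[OF J])
  qed
  then show "V Nf = V f" "V f = V fc" "V fc = V Nfc"
    unfolding Vz_def by (auto; metis)+
qed

lemma fs'_at: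
  assumes z: "z \<in> D" and J: "J \<in> SA mul e cj" and im: "Im z \<noteq> 0"
  shows "fs' mul e cj f (slice_point z J) = (1 / Im z) *\<^sub>R G2 z"
proof -
  have "imA cj (slice_point z J) = Im z *\<^sub>R J"
    using SA_cj[OF J] by (simp add: imA_def trA_def slice_point_def algebra_simps flip: scaleR_2)
  moreover have "f (slice_point z J) - f (cj (slice_point z J)) = 2 *\<^sub>R (J \<odot> G2 z)"
    using f_at[OF z J] f_at[OF z SA_uminus[OF J]] cj_slice_point[OF J] by (simp add: scaleR_2)
  ultimately show ?thesis
    using SA_mul_SA[OF J] im by (simp add: fs'_def invA_scaleR_SA[OF J])
qed

lemma fs0_at: "z \<in> D \<Longrightarrow> J \<in> SA mul e cj \<Longrightarrow> fs0 cj f (slice_point z J) = G1 z"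
  using f_at f_at[of z "- J"] SA_uminus cj_slice_point by (simp add: fs0_def flip: scaleR_2)

lemma imag_CA_if_fs'_CA:
  assumes "\<forall>x\<in>\<Omega> - realA e. fs' mul e cj f x \<in> CA mul e cj"
  shows "\<forall>z\<in>D. G2 z \<in> CA mul e cj"
proof
  fix z
  assume z: "z \<in> D"
  obtain J where J: "J \<in> SA mul e cj"
    using SA_nonempty by blast
  show "G2 z \<in> CA mul e cj"
  proof (cases "Im z = 0")
    case True
    then show ?thesis
      using is_stem_imag_real[OF stem z] CA_zero by simp
  next
    case False
    then have "(1 / Im z) *\<^sub>R G2 z \<in> CA mul e cj"
      using assms fs'_at[OF z J] slice_point_in_Omega[OF z J] slice_point_in_realA_iff[OF J] by force
    then show ?thesis
      using CA_scaleR[of _ "Im z"] False by fastforce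
  qed
qed

lemma real_CA_if_fs0_CA:
  assumes "\<forall>x\<in>\<Omega>. fs0 cj f x \<in> CA mul e cj"
  shows "\<forall>z\<in>D. G1 z \<in> CA mul e cj"
  using assms fs0_at slice_point_in_Omega SA_nonempty by fastforce

end


theorem corollary4p6:
  fixes mul :: "'a::euclidean_space \<Rightarrow> 'a \<Rightarrow> 'a" and e :: 'a and cj :: "'a \<Rightarrow> 'a"
    and D :: "complex set" and F1 F2 :: "complex \<Rightarrow> 'a"
  assumes alg: "alt_star_alg mul e cj"
    and SA_ne: "SA mul e cj \<noteq> {}"
    and D_ne: "D \<noteq> {}"
    and D_cnj: "\<forall>z\<in>D. cnj z \<in> D"
    and stem: "is_stem D F1 F2"
  shows
  \<comment> \<open>(1)\<close>
  "Vz (OmegaD mul e cj D) (sliceI mul e cj D F1 F2)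
     \<subseteq> cj ` Vz (OmegaD mul e cj D) (normal_fun mul e cj D (cj \<circ> F1) (cj \<circ> F2))
   \<and>
  \<comment> \<open>(2)\<close>
   ((\<forall>x\<in>OmegaD mul e cj D - realA e. fs' mul e cj (sliceI mul e cj D F1 F2) x \<in> CA mul e cj) \<longrightarrow>
      (\<forall>x\<in>OmegaD mul e cj D.
          (Sx mul e cj x \<inter> Vz (OmegaD mul e cj D) (sliceI mul e cj D F1 F2) = {} \<and>
           Sx mul e cj x \<inter> Vz (OmegaD mul e cj D) (slice_conj mul e cj D F1 F2) = {})
        \<or> ((\<exists>a. Sx mul e cj x \<inter> Vz (OmegaD mul e cj D) (sliceI mul e cj D F1 F2) = {a}) \<and>
           (\<exists>b. Sx mul e cj x \<inter> Vz (OmegaD mul e cj D) (slice_conj mul e cj D F1 F2) = {b}))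
        \<or> (Sx mul e cj x \<inter> Vz (OmegaD mul e cj D) (sliceI mul e cj D F1 F2) = Sx mul e cj x \<and>
           Sx mul e cj x \<inter> Vz (OmegaD mul e cj D) (slice_conj mul e cj D F1 F2) = Sx mul e cj x))
    \<and> USx mul e cj (Vz (OmegaD mul e cj D) (sliceI mul e cj D F1 F2))
        \<subseteq> Vz (OmegaD mul e cj D) (normal_fun mul e cj D F1 F2)
    \<and> USx mul e cj (Vz (OmegaD mul e cj D) (sliceI mul e cj D F1 F2))
        = USx mul e cj (Vz (OmegaD mul e cj D) (slice_conj mul e cj D F1 F2))
    \<and> USx mul e cj (Vz (OmegaD mul e cj D) (slice_conj mul e cj D F1 F2))
        \<subseteq> Vz (OmegaD mul e cj D) (normal_fun mul e cj D (cj \<circ> F1) (cj \<circ> F2))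
    \<and> (nonsingular mul cj \<longrightarrow>
         USx mul e cj (Vz (OmegaD mul e cj D) (sliceI mul e cj D F1 F2))
           = USx_in mul e cj D (Vz (OmegaD mul e cj D) (normal_fun mul e cj D F1 F2)
                                \<inter> Vz (OmegaD mul e cj D) (normal_fun mul e cj D (cj \<circ> F1) (cj \<circ> F2)))
       \<and> USx mul e cj (Vz (OmegaD mul e cj D) (slice_conj mul e cj D F1 F2))
           = USx_in mul e cj D (Vz (OmegaD mul e cj D) (normal_fun mul e cj D F1 F2)
                                \<inter> Vz (OmegaD mul e cj D) (normal_fun mul e cj D (cj \<circ> F1) (cj \<circ> F2)))
       \<and> (tame mul e cj D F1 F2 \<longrightarrow>
            USx mul e cj (Vz (OmegaD mul e cj D) (sliceI mul e cj D F1 F2))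
              = Vz (OmegaD mul e cj D) (normal_fun mul e cj D F1 F2)
          \<and> USx mul e cj (Vz (OmegaD mul e cj D) (slice_conj mul e cj D F1 F2))
              = Vz (OmegaD mul e cj D) (normal_fun mul e cj D F1 F2)
          \<and> Vz (OmegaD mul e cj D) (normal_fun mul e cj D F1 F2)
              = Vz (OmegaD mul e cj D) (normal_fun mul e cj D (cj \<circ> F1) (cj \<circ> F2)))))
   \<and>
  \<comment> \<open>(3)\<close>
   ((\<forall>x\<in>OmegaD mul e cj D. fs0 cj (sliceI mul e cj D F1 F2) x \<in> CA mul e cj) \<and>
    (\<forall>x\<in>OmegaD mul e cj D - realA e. fs' mul e cj (sliceI mul e cj D F1 F2) x \<in> CA mul e cj) \<longrightarrow>
      USx_in mul e cj D (Vz (OmegaD mul e cj D) (normal_fun mul e cj D F1 F2))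
        = USx mul e cj (Vz (OmegaD mul e cj D) (sliceI mul e cj D F1 F2))
    \<and> USx mul e cj (Vz (OmegaD mul e cj D) (sliceI mul e cj D F1 F2))
        = USx mul e cj (Vz (OmegaD mul e cj D) (slice_conj mul e cj D F1 F2))
    \<and> USx mul e cj (Vz (OmegaD mul e cj D) (slice_conj mul e cj D F1 F2))
        = USx_in mul e cj D (Vz (OmegaD mul e cj D) (normal_fun mul e cj D (cj \<circ> F1) (cj \<circ> F2)))
    \<and> (tame mul e cj D F1 F2 \<longrightarrow>
         Vz (OmegaD mul e cj D) (normal_fun mul e cj D F1 F2)
           = USx mul e cj (Vz (OmegaD mul e cj D) (sliceI mul e cj D F1 F2))
       \<and> USx mul e cj (Vz (OmegaD mul e cj D) (sliceI mul e cj D F1 F2))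
           = USx mul e cj (Vz (OmegaD mul e cj D) (slice_conj mul e cj D F1 F2))
       \<and> USx mul e cj (Vz (OmegaD mul e cj D) (slice_conj mul e cj D F1 F2))
           = Vz (OmegaD mul e cj D) (normal_fun mul e cj D (cj \<circ> F1) (cj \<circ> F2)))
    \<and> (slice_preserving e D F1 F2 \<longrightarrow>
         Vz (OmegaD mul e cj D) (normal_fun mul e cj D F1 F2)
           = Vz (OmegaD mul e cj D) (sliceI mul e cj D F1 F2)
       \<and> Vz (OmegaD mul e cj D) (sliceI mul e cj D F1 F2)
           = Vz (OmegaD mul e cj D) (slice_conj mul e cj D F1 F2)
       \<and> Vz (OmegaD mul e cj D) (slice_conj mul e cj D F1 F2)
           = Vz (OmegaD mul e cj D) (normal_fun mul e cj D (cj \<circ> F1) (cj \<circ> F2))))"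
proof -
  interpret stem_function mul e cj D F1 F2
    using alg SA_ne stem by unfold_locales
  have imag: "\<forall>z\<in>D. F2 z \<in> CA mul e cj" if "\<forall>x\<in>\<Omega> - realA e. fs' mul e cj f x \<in> CA mul e cj"
    using that by (rule imag_CA_if_fs'_CA)
  have CA: "\<forall>z\<in>D. F1 z \<in> CA mul e cj \<and> F2 z \<in> CA mul e cj"
    if "\<forall>x\<in>\<Omega>. fs0 cj f x \<in> CA mul e cj" "\<forall>x\<in>\<Omega> - realA e. fs' mul e cj f x \<in> CA mul e cj"
    using that imag real_CA_if_fs0_CA by blast
  have tame: "USx_in mul e cj D (V Nf) = V Nf" "V Nf = V Nfc" if "tame mul e cj D F1 F2"
    using that tame_USx_in_zeros_Nf tame_zeros_Nf_eq_zeros_Nfc by blast+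
  show ?thesis
    using zeros_f_subset_cj_zeros_Nfc slice_sphere_zeros_trichotomy[OF imag]
      USx_zeros_f_subset_zeros_Nf[OF imag] USx_zeros_f_eq_USx_zeros_fc[OF imag]
      USx_zeros_fc_subset_zeros_Nfc[OF imag] USx_zeros_f_eq_USx_in_common_zeros_N[OF imag]
      USx_in_zeros_Nf_eq_USx_zeros_f[OF CA] USx_in_zeros_Nfc_eq_USx_zeros_fc[OF CA]
      tame slice_preserving_zeros
    by (intro conjI impI ballI) (simp_all add: USx_in_subset)
qed

end
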